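(* Let $X$ be a cubic vertex-transitive graph for which $1$ is a simple eigenvalue, let $\mathbf{z}$ be a $\pm1$ eigenvector for $1$, $V^+=\{x\mid\mathbf{z}(x)=1\}$, $V^-=\{x\mid \mathbf{z}(x)=-1\}$, and suppose $X[V^+]$ is the disjoint union of cycles $C_1,\dots,C_m$ and $X[V^-]$ is the disjoint union of cycles $D_1,\dots,D_m$, all of length $k$. Let $G$ be the contracted multigraph of $X$. Then every automorphism of $X$ induces an automorphism of $G$, so that $\mathrm{Aut}(X)\le \mathrm{Aut}(G)$, and every subgroup of $\mathrm{Aut}(X)$ acting transitively on $V(X)$ acts transitively on the arcs of $G$. In particular, $G$ is arc-transitive and bipartite.
   Context: The contracted multigraph $G$ of $X$ has $2m$ vertices $c_1,\dots,c_m,d_1,\dots,d_m$ (one for each cycle $C_i$ and each cycle $D_i$), and for each edge of $X$ joining a vertex of $C_i$ to a vertex of $D_r$ there is an edge of $G$ joining $c_i$ and $d_r$ (so parallel edges may occur). An arc of a multigraph is an edge together with a choice of direction. *)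

theory Defs
  imports "Jordan_Normal_Form.Char_Poly"
begin

definition simple_graph :: "'a set \<Rightarrow> ('a \<Rightarrow> 'a \<Rightarrow> bool) \<Rightarrow> bool" where
  "simple_graph V E \<longleftrightarrow> finite V \<and> (\<forall>x y. E x y \<longrightarrow> x \<in> V \<and> y \<in> V)
     \<and> (\<forall>x y. E x y \<longrightarrow> E y x) \<and> (\<forall>x. \<not> E x x)"

definition cubic :: "'a set \<Rightarrow> ('a \<Rightarrow> 'a \<Rightarrow> bool) \<Rightarrow> bool" where
  "cubic V E \<longleftrightarrow> (\<forall>x\<in>V. card {y\<in>V. E x y} = 3)"

(* Automorphisms, taken extensional (identity outside V) so that they form a group of functions. *)
definition graph_aut :: "'a set \<Rightarrow> ('a \<Rightarrow> 'a \<Rightarrow> bool) \<Rightarrow> ('a \<Rightarrow> 'a) set" where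
  "graph_aut V E = {\<sigma>. bij_betw \<sigma> V V \<and> (\<forall>x\<in>V. \<forall>y\<in>V. E x y \<longleftrightarrow> E (\<sigma> x) (\<sigma> y))
                       \<and> (\<forall>x. x \<notin> V \<longrightarrow> \<sigma> x = x)}"

definition vertex_transitive :: "'a set \<Rightarrow> ('a \<Rightarrow> 'a \<Rightarrow> bool) \<Rightarrow> bool" where
  "vertex_transitive V E \<longleftrightarrow> (\<forall>x\<in>V. \<forall>y\<in>V. \<exists>\<sigma>\<in>graph_aut V E. \<sigma> x = y)"

definition aut_inv :: "'a set \<Rightarrow> ('a \<Rightarrow> 'a) \<Rightarrow> 'a \<Rightarrow> 'a" where
  "aut_inv V \<sigma> = (\<lambda>x. if x \<in> V then inv_into V \<sigma> x else x)"

definition aut_subgroup :: "'a set \<Rightarrow> ('a \<Rightarrow> 'a \<Rightarrow> bool) \<Rightarrow> ('a \<Rightarrow> 'a) set \<Rightarrow> bool" where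
  "aut_subgroup V E H \<longleftrightarrow> H \<subseteq> graph_aut V E \<and> id \<in> H
     \<and> (\<forall>\<sigma>\<in>H. \<forall>\<tau>\<in>H. \<sigma> \<circ> \<tau> \<in> H) \<and> (\<forall>\<sigma>\<in>H. aut_inv V \<sigma> \<in> H)"

definition transitive_on :: "('a \<Rightarrow> 'a) set \<Rightarrow> 'a set \<Rightarrow> bool" where
  "transitive_on H V \<longleftrightarrow> (\<forall>x\<in>V. \<forall>y\<in>V. \<exists>\<sigma>\<in>H. \<sigma> x = y)"

(* Adjacency matrix w.r.t. a fixed enumeration of V (the characteristic polynomial
   does not depend on the enumeration). *)
definition vert_enum :: "'a set \<Rightarrow> nat \<Rightarrow> 'a" where
  "vert_enum V = (SOME f. bij_betw f {..<card V} V)"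

definition adj_mat :: "'a set \<Rightarrow> ('a \<Rightarrow> 'a \<Rightarrow> bool) \<Rightarrow> real mat" where
  "adj_mat V E = mat (card V) (card V)
      (\<lambda>(i,j). if E (vert_enum V i) (vert_enum V j) then 1 else 0)"

definition simple_eigenvalue :: "'a set \<Rightarrow> ('a \<Rightarrow> 'a \<Rightarrow> bool) \<Rightarrow> real \<Rightarrow> bool" where
  "simple_eigenvalue V E lam \<longleftrightarrow> order lam (char_poly (adj_mat V E)) = 1"

definition is_eigvec :: "'a set \<Rightarrow> ('a \<Rightarrow> 'a \<Rightarrow> bool) \<Rightarrow> real \<Rightarrow> ('a \<Rightarrow> real) \<Rightarrow> bool" where
  "is_eigvec V E lam f \<longleftrightarrow> (\<exists>x\<in>V. f x \<noteq> 0)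
     \<and> (\<forall>x\<in>V. (\<Sum>y\<in>{y\<in>V. E x y}. f y) = lam * f x)"

definition induced_cycle :: "('a \<Rightarrow> 'a \<Rightarrow> bool) \<Rightarrow> 'a set \<Rightarrow> nat \<Rightarrow> bool" where
  "induced_cycle E S k \<longleftrightarrow> k \<ge> 3 \<and> (\<exists>f. bij_betw f {..<k} S \<and>
      (\<forall>i<k. \<forall>j<k. E (f i) (f j) \<longleftrightarrow> j = Suc i mod k \<or> i = Suc j mod k))"

definition cycle_decomp :: "('a \<Rightarrow> 'a \<Rightarrow> bool) \<Rightarrow> 'a set \<Rightarrow> nat \<Rightarrow> (nat \<Rightarrow> 'a set) \<Rightarrow> nat \<Rightarrow> bool" where
  "cycle_decomp E U m C k \<longleftrightarrow> (\<Union>i<m. C i) = U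
     \<and> (\<forall>i<m. \<forall>j<m. i \<noteq> j \<longrightarrow> C i \<inter> C j = {})
     \<and> (\<forall>i<m. induced_cycle E (C i) k)
     \<and> (\<forall>i<m. \<forall>j<m. i \<noteq> j \<longrightarrow> (\<forall>x\<in>C i. \<forall>y\<in>C j. \<not> E x y))"

(* Contracted multigraph G: vertices Inl i = c_i, Inr r = d_r;
   edges = edges {x,y} of X with x in V+ and y in V- (labelled by themselves);
   an edge {x,y} with x in C_i, y in D_r joins c_i and d_r. *)
definition blk :: "nat \<Rightarrow> (nat \<Rightarrow> 'a set) \<Rightarrow> (nat \<Rightarrow> 'a set) \<Rightarrow> 'a \<Rightarrow> nat + nat" where
  "blk m C D x = (if \<exists>i<m. x \<in> C i then Inl (THE i. i < m \<and> x \<in> C i)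
                  else Inr (THE r. r < m \<and> x \<in> D r))"

definition cG_verts :: "nat \<Rightarrow> (nat + nat) set" where
  "cG_verts m = Inl ` {..<m} \<union> Inr ` {..<m}"

definition cG_edges :: "'a set \<Rightarrow> ('a \<Rightarrow> 'a \<Rightarrow> bool) \<Rightarrow> ('a \<Rightarrow> real) \<Rightarrow> 'a set set" where
  "cG_edges V E z = {{x, y} | x y. x \<in> V \<and> y \<in> V \<and> E x y \<and> z x = 1 \<and> z y = -1}"

definition cG_inc :: "nat \<Rightarrow> (nat \<Rightarrow> 'a set) \<Rightarrow> (nat \<Rightarrow> 'a set) \<Rightarrow> 'a set \<Rightarrow> (nat + nat) set" where
  "cG_inc m C D e = blk m C D ` e"

(* General multigraphs (VG, EG, inc), inc e = set of endpoints of edge e *)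
definition mg_aut :: "'v set \<Rightarrow> 'e set \<Rightarrow> ('e \<Rightarrow> 'v set) \<Rightarrow> (('v \<Rightarrow> 'v) \<times> ('e \<Rightarrow> 'e)) set" where
  "mg_aut VG EG inc = {(\<phi>, \<psi>). bij_betw \<phi> VG VG \<and> bij_betw \<psi> EG EG
       \<and> (\<forall>e\<in>EG. inc (\<psi> e) = \<phi> ` inc e)}"

(* Arcs: an edge together with a choice of direction (tail, head) *)
definition mg_arcs :: "'v set \<Rightarrow> 'e set \<Rightarrow> ('e \<Rightarrow> 'v set) \<Rightarrow> ('e \<times> 'v \<times> 'v) set" where
  "mg_arcs VG EG inc = {(e, u, v). e \<in> EG \<and> inc e = {u, v}}"

definition mg_arc_map :: "('v \<Rightarrow> 'v) \<times> ('e \<Rightarrow> 'e) \<Rightarrow> 'e \<times> 'v \<times> 'v \<Rightarrow> 'e \<times> 'v \<times> 'v" where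
  "mg_arc_map g a = (case g of (\<phi>, \<psi>) \<Rightarrow> case a of (e, u, v) \<Rightarrow> (\<psi> e, \<phi> u, \<phi> v))"

definition arc_transitive_by :: "'v set \<Rightarrow> 'e set \<Rightarrow> ('e \<Rightarrow> 'v set)
     \<Rightarrow> (('v \<Rightarrow> 'v) \<times> ('e \<Rightarrow> 'e)) set \<Rightarrow> bool" where
  "arc_transitive_by VG EG inc A \<longleftrightarrow>
     (\<forall>a\<in>mg_arcs VG EG inc. \<forall>b\<in>mg_arcs VG EG inc. \<exists>g\<in>A. mg_arc_map g a = b)"

definition mg_arc_transitive :: "'v set \<Rightarrow> 'e set \<Rightarrow> ('e \<Rightarrow> 'v set) \<Rightarrow> bool" where
  "mg_arc_transitive VG EG inc \<longleftrightarrow> arc_transitive_by VG EG inc (mg_aut VG EG inc)"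

definition mg_bipartite_cd :: "nat \<Rightarrow> 'e set \<Rightarrow> ('e \<Rightarrow> (nat + nat) set) \<Rightarrow> bool" where
  "mg_bipartite_cd m EG inc \<longleftrightarrow> (\<forall>e\<in>EG. \<exists>i<m. \<exists>r<m. inc e = {Inl i, Inr r})"

definition induced_aut :: "nat \<Rightarrow> (nat \<Rightarrow> 'a set) \<Rightarrow> (nat \<Rightarrow> 'a set) \<Rightarrow> 'a set
     \<Rightarrow> ('a \<Rightarrow> 'a) \<Rightarrow> ((nat + nat) \<Rightarrow> (nat + nat)) \<times> ('a set \<Rightarrow> 'a set) \<Rightarrow> bool" where
  "induced_aut m C D V \<sigma> g \<longleftrightarrow> (\<forall>x\<in>V. fst g (blk m C D x) = blk m C D (\<sigma> x))
       \<and> (\<forall>e. snd g e = \<sigma> ` e)"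

end

theory Submission
  imports Defs "Jordan_Normal_Form.Jordan_Normal_Form_Uniqueness"
    "Jordan_Normal_Form.Jordan_Normal_Form_Existence"
begin

(* Since 1 is a simple eigenvalue of the adjacency matrix A, the 1-eigenspace is spanned by z.
   For an automorphism sigma, z o sigma is again a 1-eigenvector, so z o sigma = z or -z, and
   sigma permutes the sign classes V+ and V-. Being an automorphism of X, it then maps each of the
   induced cycles C_i, D_r onto another one, and thus acts on the vertices of G compatibly with the
   edges of G, which are the edges of X between V+ and V-. As X is cubic and A z = z, every vertex
   has exactly one neighbour of the opposite sign, so an arc of G is determined by the tail x of its
   underlying edge of X: an automorphism moving x to x' moves the arc at x to the arc at x'. *)

section \<open>Simple eigenvalues of real matrices\<close>

lemma kernel_dim_le_1_proportional:
  fixes M :: "'a :: field mat"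
  assumes M: "M \<in> carrier_mat n n" and dim: "kernel_dim M \<le> 1"
    and v: "v \<in> mat_kernel M" "v \<noteq> 0\<^sub>v n" and w: "w \<in> mat_kernel M"
  shows "\<exists>c. w = c \<cdot>\<^sub>v v"
proof -
  interpret K: kernel n n M by unfold_locales (rule M)
  obtain B where "finite B" "K.basis B" using kernel_basis_exists[OF M] by blast
  then have fin_dim: "K.Ker.fin_dim" unfolding K.Ker.fin_dim_def K.Ker.basis_def by auto
  have "K.lin_indpt {}" unfolding K.Ker.lin_dep_def by blast
  then have "K.lin_indpt {v}"
    using K.Ker.lin_dep_iff_in_span[of "{}" v] K.Ker.span_empty v by simp
  then have "K.basis {v}"
    using K.Ker.dim_li_is_basis[OF fin_dim, of "{v}"] dim v by simp
  then have "w \<in> K.span {v}" using w unfolding K.Ker.basis_def by simp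
  then obtain a A where A: "A \<subseteq> {v}" "w = K.lincomb a A" unfolding K.Ker.span_def by blast
  have "w $ i = (\<Sum>x\<in>A. a x) * v $ i" if "i < n" for i
  proof -
    have "w $ i = (\<Sum>x\<in>A. a x * x $ i)" using K.lincomb_index[OF that] A v by auto
    also have "\<dots> = (\<Sum>x\<in>A. a x * v $ i)" using A by (intro sum.cong) auto
    finally show ?thesis by (simp add: sum_distrib_right)
  qed
  then have "w = (\<Sum>x\<in>A. a x) \<cdot>\<^sub>v v" using v w mat_kernel[OF M] by (intro eq_vecI) auto
  then show ?thesis ..
qed

lemma kernel_dim_char_matrix_le_order:
  fixes A :: "complex mat"
  assumes A: "A \<in> carrier_mat n n"
  shows "kernel_dim (char_matrix A a) \<le> Polynomial.order a (char_poly A)"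
proof -
  obtain as where "char_poly A = (\<Prod>a\<leftarrow>as. [:- a, 1:])" using char_poly_factorized[OF A] by blast
  then obtain n_as where jnf: "jordan_nf A n_as" using jordan_nf_exists[OF A] by blast
  have "kernel_dim (char_matrix A a) = dim_gen_eigenspace A a 1"
    unfolding dim_gen_eigenspace_def using A by simp
  also have "\<dots> = (\<Sum>n\<leftarrow>map fst [(n, e)\<leftarrow>n_as. e = a]. min 1 n)" by (rule dim_gen_eigenspace[OF jnf])
  also have "\<dots> \<le> (\<Sum>n\<leftarrow>map fst [(n, e)\<leftarrow>n_as. e = a]. n)" by (rule sum_list_mono) simp
  also have "\<dots> = Polynomial.order a (char_poly A)"
    unfolding jordan_nf_order[OF jnf] by (simp add: case_prod_unfold)
  finally show ?thesis .
qed

lemma simple_eigenvalue_eigenvectors_proportional: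
  fixes A :: "real mat"
  assumes A: "A \<in> carrier_mat n n" and simple: "Polynomial.order a (char_poly A) = 1"
    and v: "v \<in> carrier_vec n" "A *\<^sub>v v = a \<cdot>\<^sub>v v" "v \<noteq> 0\<^sub>v n"
    and w: "w \<in> carrier_vec n" "A *\<^sub>v w = a \<cdot>\<^sub>v w"
  shows "\<exists>c. w = c \<cdot>\<^sub>v v"
proof (cases "w = 0\<^sub>v n")
  case True
  then have "w = 0 \<cdot>\<^sub>v v" using v by auto
  then show ?thesis ..
next
  case False
  \<comment> \<open>The Jordan normal form needs an algebraically closed field, so we pass to \<open>\<complex>\<close>.\<close>
  let ?A = "map_mat complex_of_real A" and ?v = "map_vec complex_of_real v"
    and ?w = "map_vec complex_of_real w" and ?a = "complex_of_real a"
  have A': "?A \<in> carrier_mat n n" using A by simp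
  have char_matrix_carrier: "char_matrix ?A ?a \<in> carrier_mat n n" using A' by (simp add: char_matrix_def)
  interpret of_real_poly: map_poly_inj_idom_divide_hom complex_of_real ..
  have "Polynomial.order ?a (char_poly ?A) = 1"
    using of_real_poly.order_hom[of a "char_poly A"] simple by (simp add: of_real_hom.char_poly_hom[OF A])
  then have dim: "kernel_dim (char_matrix ?A ?a) \<le> 1"
    using kernel_dim_char_matrix_le_order[OF A', of ?a] by simp
  have "eigenvector A v a" "eigenvector A w a"
    unfolding eigenvector_def using v w False A by auto
  then have "eigenvector ?A ?v ?a" "eigenvector ?A ?w ?a"
    by (auto intro: of_real_hom.eigenvector_hom[OF A])
  then have "?v \<in> mat_kernel (char_matrix ?A ?a)" "?w \<in> mat_kernel (char_matrix ?A ?a)"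
    "?v \<noteq> 0\<^sub>v n"
    using eigenvector_char_matrix[OF A'] mat_kernelI[OF char_matrix_carrier] by auto
  then obtain c where c: "?w = c \<cdot>\<^sub>v ?v"
    using kernel_dim_le_1_proportional[OF char_matrix_carrier dim] by blast
  have "w = Re c \<cdot>\<^sub>v v"
  proof (intro eq_vecI)
    fix i assume "i < dim_vec (Re c \<cdot>\<^sub>v v)"
    then have "complex_of_real (w $ i) = c * complex_of_real (v $ i)"
      using c v w by (metis index_map_vec index_smult_vec carrier_vecD)
    then have "Re (complex_of_real (w $ i)) = Re (c * complex_of_real (v $ i))" by (rule arg_cong)
    then have "w $ i = Re c * v $ i" by simp
    then show "w $ i = (Re c \<cdot>\<^sub>v v) $ i" using \<open>i < dim_vec (Re c \<cdot>\<^sub>v v)\<close> by simp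
  qed (use v w in auto)
  then show ?thesis ..
qed

section \<open>Eigenfunctions of a graph and its automorphisms\<close>

lemma vert_enum_bij:
  assumes "finite V"
  shows "bij_betw (vert_enum V) {..<card V} V"
proof -
  have "\<exists>f. bij_betw f {..<card V} V"
    using ex_bij_betw_nat_finite[OF assms] by (simp add: atLeast0LessThan)
  then show ?thesis unfolding vert_enum_def by (rule someI_ex)
qed

definition vertex_vec :: "'a set \<Rightarrow> ('a \<Rightarrow> real) \<Rightarrow> real vec" where
  "vertex_vec V f = vec (card V) (\<lambda>i. f (vert_enum V i))"

lemma vertex_vec_carrier [simp]: "vertex_vec V f \<in> carrier_vec (card V)"
  unfolding vertex_vec_def by simp

lemma vertex_vec_eq_iff:
  assumes "finite V"
  shows "vertex_vec V f = vertex_vec V g \<longleftrightarrow> (\<forall>x\<in>V. f x = g x)"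
proof -
  have "vertex_vec V f = vertex_vec V g \<longleftrightarrow> (\<forall>i<card V. f (vert_enum V i) = g (vert_enum V i))"
    unfolding vertex_vec_def vec_eq_iff by auto
  also have "\<dots> \<longleftrightarrow> (\<forall>x\<in>vert_enum V ` {..<card V}. f x = g x)" by auto
  also have "vert_enum V ` {..<card V} = V" using bij_betw_imp_surj_on[OF vert_enum_bij[OF assms]] .
  finally show ?thesis .
qed

lemma smult_vertex_vec: "c \<cdot>\<^sub>v vertex_vec V f = vertex_vec V (\<lambda>x. c * f x)"
  unfolding vertex_vec_def by auto

lemma zero_vertex_vec: "0\<^sub>v (card V) = vertex_vec V (\<lambda>_. 0)"
  unfolding vertex_vec_def by auto

lemma adj_mat_mult_vertex_vec:
  assumes V: "finite V"
  shows "adj_mat V E *\<^sub>v vertex_vec V f = vertex_vec V (\<lambda>x. \<Sum>y\<in>{y\<in>V. E x y}. f y)"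
proof (rule eq_vecI)
  fix i assume "i < dim_vec (vertex_vec V (\<lambda>x. \<Sum>y\<in>{y\<in>V. E x y}. f y))"
  then have i: "i < card V" by (simp add: vertex_vec_def)
  let ?x = "vert_enum V i"
  have "(adj_mat V E *\<^sub>v vertex_vec V f) $ i
      = (\<Sum>j<card V. (if E ?x (vert_enum V j) then 1 else 0) * f (vert_enum V j))"
    using i unfolding adj_mat_def vertex_vec_def by (simp add: scalar_prod_def atLeast0LessThan)
  also have "\<dots> = (\<Sum>y\<in>V. (if E ?x y then 1 else 0) * f y)"
    by (rule sum.reindex_bij_betw[OF vert_enum_bij[OF V]])
  also have "\<dots> = (\<Sum>y\<in>V. if E ?x y then f y else 0)" by (rule sum.cong) auto
  also have "\<dots> = (\<Sum>y\<in>{y\<in>V. E ?x y}. f y)" by (rule sum.inter_filter[OF V, symmetric])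
  finally show "(adj_mat V E *\<^sub>v vertex_vec V f) $ i = vertex_vec V (\<lambda>x. \<Sum>y\<in>{y\<in>V. E x y}. f y) $ i"
    using i by (simp add: vertex_vec_def)
qed (simp add: adj_mat_def vertex_vec_def)

lemma simple_eigenvalue_eigenfunctions_proportional:
  assumes V: "finite V" and simple: "simple_eigenvalue V E \<mu>" and f: "is_eigvec V E \<mu> f"
    and g: "\<forall>x\<in>V. (\<Sum>y\<in>{y\<in>V. E x y}. g y) = \<mu> * g x"
  shows "\<exists>c. \<forall>x\<in>V. g x = c * f x"
proof -
  have "adj_mat V E \<in> carrier_mat (card V) (card V)" by (simp add: adj_mat_def)
  moreover have "adj_mat V E *\<^sub>v vertex_vec V f = \<mu> \<cdot>\<^sub>v vertex_vec V f"
    "vertex_vec V f \<noteq> 0\<^sub>v (card V)"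
    "adj_mat V E *\<^sub>v vertex_vec V g = \<mu> \<cdot>\<^sub>v vertex_vec V g"
    using f g by (auto simp: is_eigvec_def adj_mat_mult_vertex_vec[OF V] smult_vertex_vec zero_vertex_vec
        vertex_vec_eq_iff[OF V])
  ultimately obtain c where "vertex_vec V g = c \<cdot>\<^sub>v vertex_vec V f"
    using simple_eigenvalue_eigenvectors_proportional simple unfolding simple_eigenvalue_def
    by (metis vertex_vec_carrier)
  then show ?thesis by (auto simp: smult_vertex_vec vertex_vec_eq_iff[OF V])
qed

lemma graph_aut_in_V: "\<sigma> \<in> graph_aut V E \<Longrightarrow> x \<in> V \<Longrightarrow> \<sigma> x \<in> V"
  unfolding graph_aut_def by (auto dest: bij_betwE)

lemma graph_aut_adj: "\<sigma> \<in> graph_aut V E \<Longrightarrow> x \<in> V \<Longrightarrow> y \<in> V \<Longrightarrow> E (\<sigma> x) (\<sigma> y) \<longleftrightarrow> E x y"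
  unfolding graph_aut_def by auto

lemma graph_aut_neighbours:
  assumes \<sigma>: "\<sigma> \<in> graph_aut V E" and x: "x \<in> V"
  shows "bij_betw \<sigma> {y\<in>V. E x y} {y\<in>V. E (\<sigma> x) y}"
proof -
  have bij: "bij_betw \<sigma> V V" using \<sigma> unfolding graph_aut_def by simp
  have "\<sigma> ` {y\<in>V. E x y} = {y\<in>\<sigma> ` V. E (\<sigma> x) y}"
    using graph_aut_adj[OF \<sigma> x] by auto
  also have "\<sigma> ` V = V" using bij by (simp add: bij_betw_def)
  finally have "\<sigma> ` {y\<in>V. E x y} = {y\<in>V. E (\<sigma> x) y}" .
  moreover have "inj_on \<sigma> {y\<in>V. E x y}"
    using bij_betw_imp_inj_on[OF bij] by (rule inj_on_subset) auto
  ultimately show ?thesis unfolding bij_betw_def by simp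
qed

lemma eigenfunction_comp_graph_aut:
  assumes \<sigma>: "\<sigma> \<in> graph_aut V E" and f: "\<forall>x\<in>V. (\<Sum>y\<in>{y\<in>V. E x y}. f y) = \<mu> * f x"
  shows "\<forall>x\<in>V. (\<Sum>y\<in>{y\<in>V. E x y}. f (\<sigma> y)) = \<mu> * f (\<sigma> x)"
proof
  fix x assume x: "x \<in> V"
  have "(\<Sum>y\<in>{y\<in>V. E x y}. f (\<sigma> y)) = (\<Sum>y\<in>{y\<in>V. E (\<sigma> x) y}. f y)"
    by (rule sum.reindex_bij_betw[OF graph_aut_neighbours[OF \<sigma> x]])
  also have "\<dots> = \<mu> * f (\<sigma> x)" using f graph_aut_in_V[OF \<sigma> x] by blast
  finally show "(\<Sum>y\<in>{y\<in>V. E x y}. f (\<sigma> y)) = \<mu> * f (\<sigma> x)" .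
qed

lemma graph_aut_sign_eigenvector:
  assumes V: "finite V" and simple: "simple_eigenvalue V E \<mu>" and z: "is_eigvec V E \<mu> z"
    and pm: "\<forall>x\<in>V. z x = 1 \<or> z x = -1" and \<sigma>: "\<sigma> \<in> graph_aut V E"
  shows "\<exists>c. (c = 1 \<or> c = -1) \<and> (\<forall>x\<in>V. z (\<sigma> x) = c * z x)"
proof -
  obtain c where c: "\<forall>x\<in>V. z (\<sigma> x) = c * z x"
    using simple_eigenvalue_eigenfunctions_proportional[OF V simple z]
      eigenfunction_comp_graph_aut[OF \<sigma>] z unfolding is_eigvec_def by blast
  obtain x where x: "x \<in> V" using z unfolding is_eigvec_def by blast
  have "z (\<sigma> x) = c * z x" using c x by blast
  moreover have "z x = 1 \<or> z x = -1" "z (\<sigma> x) = 1 \<or> z (\<sigma> x) = -1"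
    using pm x graph_aut_in_V[OF \<sigma> x] by auto
  ultimately have "c = 1 \<or> c = -1" by auto
  with c show ?thesis by blast
qed

lemma cubic_eigenvalue_1_unique_opposite_neighbour:
  assumes V: "finite V" and cubic: "cubic V E" and pm: "\<forall>x\<in>V. z x = 1 \<or> z x = -1"
    and z: "is_eigvec V E 1 z" and x: "x \<in> V"
  shows "\<exists>!y. y \<in> V \<and> E x y \<and> z y = - z x"
proof -
  let ?S = "{y\<in>V. E x y \<and> z y = z x}" and ?O = "{y\<in>V. E x y \<and> z y = - z x}"
  have zx: "z x \<noteq> 0" using pm x by auto
  have "z y = z x \<or> z y = - z x" if "y \<in> V" for y
    using pm[rule_format, OF x] pm[rule_format, OF that] by auto
  then have split: "{y\<in>V. E x y} = ?S \<union> ?O" "?S \<inter> ?O = {}" using zx by auto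
  have fin: "finite ?S" "finite ?O" using V by auto
  have "card ?S + card ?O = card {y\<in>V. E x y}"
    using card_Un_disjoint[OF fin split(2)] split(1) by simp
  also have "\<dots> = 3" using cubic x unfolding cubic_def by simp
  finally have "card ?S + card ?O = 3" .
  moreover have "z x = real (card ?S) * z x - real (card ?O) * z x"
  proof -
    have "z x = (\<Sum>y\<in>{y\<in>V. E x y}. z y)" using z x unfolding is_eigvec_def by simp
    also have "\<dots> = (\<Sum>y\<in>?S. z y) + (\<Sum>y\<in>?O. z y)"
      unfolding split(1) by (rule sum.union_disjoint[OF fin split(2)])
    also have "\<dots> = real (card ?S) * z x - real (card ?O) * z x" by simp
    finally show ?thesis .
  qed
  then have "(real (card ?S) - real (card ?O) - 1) * z x = 0" by (simp add: algebra_simps)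
  then have "real (card ?S) - real (card ?O) = 1" using zx by simp
  ultimately have "card ?O = 1" by linarith
  then obtain y where "?O = {y}" by (auto simp: card_1_singleton_iff)
  then show ?thesis by (intro ex1I[of _ y]) blast+
qed

section \<open>The contracted multigraph\<close>

lemma induced_cycle_nonempty: "induced_cycle E B k \<Longrightarrow> B \<noteq> {}"
  unfolding induced_cycle_def by (auto dest!: bij_betw_imp_surj_on simp: lessThan_empty_iff)

lemma induced_cycle_edge_invariant:
  assumes cycle: "induced_cycle E B k"
    and invariant: "\<And>a b. a \<in> B \<Longrightarrow> b \<in> B \<Longrightarrow> E a b \<Longrightarrow> h a = h b"
    and "a \<in> B" "b \<in> B"
  shows "h a = h b"
proof -
  obtain f where f: "bij_betw f {..<k} B"
    and adj: "\<forall>i<k. \<forall>j<k. E (f i) (f j) \<longleftrightarrow> j = Suc i mod k \<or> i = Suc j mod k"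
    using cycle unfolding induced_cycle_def by blast
  have fB: "f i \<in> B" if "i < k" for i using bij_betwE[OF f] that by blast
  have const: "h (f i) = h (f 0)" if "i < k" for i
    using that
  proof (induction i)
    case (Suc i)
    then have "E (f i) (f (Suc i))" using adj by simp
    then have "h (f i) = h (f (Suc i))" using Suc.prems by (intro invariant fB) simp_all
    then show ?case using Suc by simp
  qed simp
  have surj: "f ` {..<k} = B" using bij_betw_imp_surj_on[OF f] .
  obtain i j where "i < k" "a = f i" "j < k" "b = f j"
    using \<open>a \<in> B\<close> \<open>b \<in> B\<close> unfolding surj[symmetric] by blast
  then show ?thesis using const by metis
qed

lemma cycle_decompD:
  assumes "cycle_decomp E U m C k"
  shows cycle_decomp_subset: "i < m \<Longrightarrow> x \<in> C i \<Longrightarrow> x \<in> U"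
    and cycle_decomp_cover: "x \<in> U \<Longrightarrow> \<exists>i<m. x \<in> C i"
    and cycle_decomp_disjoint: "i < m \<Longrightarrow> j < m \<Longrightarrow> x \<in> C i \<Longrightarrow> x \<in> C j \<Longrightarrow> i = j"
    and cycle_decomp_no_edges: "i < m \<Longrightarrow> j < m \<Longrightarrow> x \<in> C i \<Longrightarrow> y \<in> C j \<Longrightarrow> E x y \<Longrightarrow> i = j"
    and cycle_decomp_cycle: "i < m \<Longrightarrow> induced_cycle E (C i) k"
  using assms unfolding cycle_decomp_def by blast+

lemma cG_edgesI:
  assumes "x \<in> V" "y \<in> V" "E x y" "z x = 1" "z y = -1"
  shows "{x, y} \<in> cG_edges V E z"
  unfolding cG_edges_def using assms by (intro CollectI exI[of _ x] exI[of _ y]) simp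

lemma cG_edgesE:
  assumes "e \<in> cG_edges V E z"
  obtains x y where "e = {x, y}" "x \<in> V" "y \<in> V" "E x y" "z x = 1" "z y = -1"
  using assms unfolding cG_edges_def by blast

locale cycle_contraction =
  fixes V :: "'a set" and E :: "'a \<Rightarrow> 'a \<Rightarrow> bool" and z :: "'a \<Rightarrow> real"
    and m k :: nat and C D :: "nat \<Rightarrow> 'a set"
  assumes simple_graph: "simple_graph V E"
    and signs: "\<forall>x\<in>V. z x = 1 \<or> z x = -1"
    and positive_cycles: "cycle_decomp E {x\<in>V. z x = 1} m C k"
    and negative_cycles: "cycle_decomp E {x\<in>V. z x = -1} m D k"
begin

abbreviation "block \<equiv> blk m C D"

lemma finite_V: "finite V"
  using simple_graph unfolding simple_graph_def by simp

lemma adjacent_sym: "E x y \<Longrightarrow> E y x"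
  using simple_graph unfolding simple_graph_def by blast

lemma block_Inl:
  assumes "i < m" "x \<in> C i"
  shows "block x = Inl i"
proof -
  have "(THE i. i < m \<and> x \<in> C i) = i"
    using assms cycle_decomp_disjoint[OF positive_cycles] by (intro the_equality) auto
  then show ?thesis using assms unfolding blk_def by auto
qed

lemma block_Inr:
  assumes "r < m" "x \<in> D r"
  shows "block x = Inr r"
proof -
  have "z x = -1" using assms cycle_decomp_subset[OF negative_cycles] by blast
  then have "\<not> (\<exists>i<m. x \<in> C i)" using cycle_decomp_subset[OF positive_cycles] by fastforce
  moreover have "(THE r. r < m \<and> x \<in> D r) = r"
    using assms cycle_decomp_disjoint[OF negative_cycles] by (intro the_equality) auto
  ultimately show ?thesis unfolding blk_def by simp
qed

lemma blockE:
  assumes "x \<in> V"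
  obtains (positive) i where "i < m" "x \<in> C i" "block x = Inl i" "z x = 1"
    | (negative) r where "r < m" "x \<in> D r" "block x = Inr r" "z x = -1"
proof -
  have "z x = 1 \<or> z x = -1" using signs assms by blast
  then show ?thesis
  proof
    assume "z x = 1"
    then obtain i where "i < m" "x \<in> C i"
      using assms cycle_decomp_cover[OF positive_cycles] by blast
    then show ?thesis using positive block_Inl \<open>z x = 1\<close> by blast
  next
    assume "z x = -1"
    then obtain r where "r < m" "x \<in> D r"
      using assms cycle_decomp_cover[OF negative_cycles] by blast
    then show ?thesis using negative block_Inr \<open>z x = -1\<close> by blast
  qed
qed

lemma block_image: "block ` V = cG_verts m"
proof
  show "block ` V \<subseteq> cG_verts m"
  proof
    fix u assume "u \<in> block ` V"
    then obtain x where "x \<in> V" "u = block x" by blast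
    then show "u \<in> cG_verts m" by (cases rule: blockE) (auto simp: cG_verts_def)
  qed
  have "Inl i \<in> block ` V" if i: "i < m" for i
  proof -
    obtain x where "x \<in> C i"
      using induced_cycle_nonempty[OF cycle_decomp_cycle[OF positive_cycles i]] by blast
    then show ?thesis
      using i block_Inl cycle_decomp_subset[OF positive_cycles]
      by (metis (mono_tags) image_eqI mem_Collect_eq)
  qed
  moreover have "Inr r \<in> block ` V" if r: "r < m" for r
  proof -
    obtain x where "x \<in> D r"
      using induced_cycle_nonempty[OF cycle_decomp_cycle[OF negative_cycles r]] by blast
    then show ?thesis
      using r block_Inr cycle_decomp_subset[OF negative_cycles]
      by (metis (mono_tags) image_eqI mem_Collect_eq)
  qed
  ultimately show "cG_verts m \<subseteq> block ` V" unfolding cG_verts_def by blast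
qed

lemma block_eq_if_adjacent:
  assumes "x \<in> V" "y \<in> V" "E x y" "z x = z y"
  shows "block x = block y"
  using assms(1)
proof (cases rule: blockE)
  case (positive i)
  then obtain j where j: "j < m" "y \<in> C j"
    using assms cycle_decomp_cover[OF positive_cycles] by auto
  then have "i = j" using positive assms(3) cycle_decomp_no_edges[OF positive_cycles] by blast
  then show ?thesis using positive j block_Inl by simp
next
  case (negative r)
  then obtain s where s: "s < m" "y \<in> D s"
    using assms cycle_decomp_cover[OF negative_cycles] by auto
  then have "r = s" using negative assms(3) cycle_decomp_no_edges[OF negative_cycles] by blast
  then show ?thesis using negative s block_Inr by simp
qed

lemma same_block_cycle:
  assumes "x \<in> V" "y \<in> V" "block x = block y"
  obtains B where "induced_cycle E B k" "x \<in> B" "y \<in> B" "\<forall>b\<in>B. b \<in> V \<and> z b = z x"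
  using assms(1)
proof (cases rule: blockE)
  case (positive i)
  have "y \<in> C i" using assms(2)
    by (cases rule: blockE) (use positive assms(3) in auto)
  show ?thesis
  proof (rule that)
    show "induced_cycle E (C i) k" using cycle_decomp_cycle[OF positive_cycles positive(1)] .
    show "\<forall>b\<in>C i. b \<in> V \<and> z b = z x"
      using cycle_decomp_subset[OF positive_cycles positive(1)] positive(4) by auto
  qed fact+
next
  case (negative r)
  have "y \<in> D r" using assms(2)
    by (cases rule: blockE) (use negative assms(3) in auto)
  show ?thesis
  proof (rule that)
    show "induced_cycle E (D r) k" using cycle_decomp_cycle[OF negative_cycles negative(1)] .
    show "\<forall>b\<in>D r. b \<in> V \<and> z b = z x"
      using cycle_decomp_subset[OF negative_cycles negative(1)] negative(4) by auto
  qed fact+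
qed

definition respects_signs :: "('a \<Rightarrow> 'a) \<Rightarrow> bool" where
  "respects_signs \<sigma> \<longleftrightarrow> (\<forall>x\<in>V. \<forall>y\<in>V. z (\<sigma> x) = z (\<sigma> y) \<longleftrightarrow> z x = z y)"

lemma graph_aut_block_eq:
  assumes \<sigma>: "\<sigma> \<in> graph_aut V E" "respects_signs \<sigma>"
    and xy: "x \<in> V" "y \<in> V" "block x = block y"
  shows "block (\<sigma> x) = block (\<sigma> y)"
proof -
  obtain B where B: "induced_cycle E B k" "x \<in> B" "y \<in> B" "\<forall>b\<in>B. b \<in> V \<and> z b = z x"
    using same_block_cycle[OF xy] .
  have "block (\<sigma> a) = block (\<sigma> b)" if "a \<in> B" "b \<in> B" "E a b" for a b
  proof (rule block_eq_if_adjacent)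
    have ab: "a \<in> V" "b \<in> V" "z a = z b" using that B(4) by auto
    then show "\<sigma> a \<in> V" "\<sigma> b \<in> V" using graph_aut_in_V[OF \<sigma>(1)] by auto
    show "E (\<sigma> a) (\<sigma> b)" using graph_aut_adj[OF \<sigma>(1) ab(1,2)] that(3) by simp
    show "z (\<sigma> a) = z (\<sigma> b)" using \<sigma>(2) ab unfolding respects_signs_def by blast
  qed
  then show ?thesis
    by (rule induced_cycle_edge_invariant[OF B(1) _ B(2,3), where h = "\<lambda>a. block (\<sigma> a)"])
qed

definition cycle_rep :: "nat + nat \<Rightarrow> 'a" where
  "cycle_rep u = (SOME x. x \<in> V \<and> block x = u)"

lemma cycle_rep:
  assumes "u \<in> cG_verts m"
  shows "cycle_rep u \<in> V" "block (cycle_rep u) = u"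
proof -
  have "u \<in> block ` V" using assms block_image by simp
  then have "\<exists>x. x \<in> V \<and> block x = u" by blast
  then have "cycle_rep u \<in> V \<and> block (cycle_rep u) = u" unfolding cycle_rep_def by (rule someI_ex)
  then show "cycle_rep u \<in> V" "block (cycle_rep u) = u" by auto
qed

definition contraction_map ::
    "('a \<Rightarrow> 'a) \<Rightarrow> ((nat + nat) \<Rightarrow> (nat + nat)) \<times> ('a set \<Rightarrow> 'a set)" where
  "contraction_map \<sigma> = ((\<lambda>u. block (\<sigma> (cycle_rep u))), image \<sigma>)"

lemma contraction_map_block:
  assumes "\<sigma> \<in> graph_aut V E" "respects_signs \<sigma>" "x \<in> V"
  shows "fst (contraction_map \<sigma>) (block x) = block (\<sigma> x)"
proof -
  have "block x \<in> cG_verts m" using block_image assms(3) by blast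
  note rep = cycle_rep[OF this]
  have "block (\<sigma> (cycle_rep (block x))) = block (\<sigma> x)"
    by (rule graph_aut_block_eq[OF assms(1,2) rep(1) assms(3) rep(2)])
  then show ?thesis unfolding contraction_map_def by simp
qed

lemma induced_aut_contraction_map:
  "\<sigma> \<in> graph_aut V E \<Longrightarrow> respects_signs \<sigma> \<Longrightarrow> induced_aut m C D V \<sigma> (contraction_map \<sigma>)"
  unfolding induced_aut_def by (simp add: contraction_map_block) (simp add: contraction_map_def)

lemma contraction_map_bij_verts:
  assumes \<sigma>: "\<sigma> \<in> graph_aut V E" "respects_signs \<sigma>"
  shows "bij_betw (fst (contraction_map \<sigma>)) (cG_verts m) (cG_verts m)"
proof -
  let ?\<phi> = "fst (contraction_map \<sigma>)"
  have "?\<phi> ` cG_verts m = (\<lambda>x. ?\<phi> (block x)) ` V"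
    by (simp add: block_image[symmetric] image_image)
  also have "\<dots> = block ` \<sigma> ` V"
    using contraction_map_block[OF \<sigma>] by (simp add: image_image cong: image_cong)
  also have "\<sigma> ` V = V" using \<sigma>(1) unfolding graph_aut_def bij_betw_def by simp
  finally have "?\<phi> ` cG_verts m = cG_verts m" by (simp add: block_image)
  moreover have "finite (cG_verts m)" by (simp add: cG_verts_def)
  ultimately show ?thesis unfolding bij_betw_def by (metis finite_surj_inj order_refl)
qed

lemma image_cG_edge:
  assumes \<sigma>: "\<sigma> \<in> graph_aut V E" "respects_signs \<sigma>" and e: "e \<in> cG_edges V E z"
  shows "\<sigma> ` e \<in> cG_edges V E z"
proof -
  obtain x y where xy: "e = {x, y}" "x \<in> V" "y \<in> V" "E x y" "z x = 1" "z y = -1"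
    using e by (rule cG_edgesE)
  have \<sigma>xy: "\<sigma> x \<in> V" "\<sigma> y \<in> V" "E (\<sigma> x) (\<sigma> y)"
    using xy graph_aut_in_V[OF \<sigma>(1)] graph_aut_adj[OF \<sigma>(1)] by auto
  have "z (\<sigma> x) \<noteq> z (\<sigma> y)" using \<sigma>(2) xy unfolding respects_signs_def by auto
  then have "z (\<sigma> x) = 1 \<and> z (\<sigma> y) = -1 \<or> z (\<sigma> y) = 1 \<and> z (\<sigma> x) = -1"
    using signs[rule_format, OF \<sigma>xy(1)] signs[rule_format, OF \<sigma>xy(2)] by auto
  then show ?thesis
    using cG_edgesI[of "\<sigma> x" V "\<sigma> y"] cG_edgesI[of "\<sigma> y" V "\<sigma> x"] \<sigma>xy adjacent_sym
    unfolding xy(1) by (auto simp: insert_commute)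
qed

lemma contraction_map_mg_aut:
  assumes \<sigma>: "\<sigma> \<in> graph_aut V E" "respects_signs \<sigma>"
  shows "contraction_map \<sigma> \<in> mg_aut (cG_verts m) (cG_edges V E z) (cG_inc m C D)"
proof -
  have edges_Pow: "cG_edges V E z \<subseteq> Pow V" unfolding cG_edges_def by auto
  have "image \<sigma> ` cG_edges V E z \<subseteq> cG_edges V E z" using image_cG_edge[OF \<sigma>] by blast
  moreover have "inj_on (image \<sigma>) (cG_edges V E z)"
    using \<sigma>(1) edges_Pow unfolding graph_aut_def
    by (blast intro: inj_on_subset[OF inj_on_image_Pow] bij_betw_imp_inj_on)
  moreover have "finite (cG_edges V E z)"
    using edges_Pow finite_V by (meson finite_Pow_iff finite_subset)
  ultimately have edges: "bij_betw (image \<sigma>) (cG_edges V E z) (cG_edges V E z)"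
    unfolding bij_betw_def using endo_inj_surj by blast
  have "cG_inc m C D (\<sigma> ` e) = fst (contraction_map \<sigma>) ` cG_inc m C D e"
    if "e \<in> cG_edges V E z" for e
  proof -
    have "e \<subseteq> V" using that edges_Pow by blast
    then show ?thesis
      unfolding cG_inc_def image_image using contraction_map_block[OF \<sigma>] by (intro image_cong) auto
  qed
  with contraction_map_bij_verts[OF \<sigma>] edges show ?thesis
    unfolding mg_aut_def by (simp add: contraction_map_def)
qed

lemma contraction_bipartite: "mg_bipartite_cd m (cG_edges V E z) (cG_inc m C D)"
  unfolding mg_bipartite_cd_def
proof
  fix e assume "e \<in> cG_edges V E z"
  then obtain x y where xy: "e = {x, y}" "x \<in> V" "y \<in> V" "E x y" "z x = 1" "z y = -1"
    by (rule cG_edgesE)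
  obtain i where "i < m" "block x = Inl i"
    using xy(2) by (cases rule: blockE) (use xy(5) in auto)
  moreover obtain r where "r < m" "block y = Inr r"
    using xy(3) by (cases rule: blockE) (use xy(6) in auto)
  ultimately show "\<exists>i<m. \<exists>r<m. cG_inc m C D e = {Inl i, Inr r}"
    unfolding cG_inc_def xy(1) by auto
qed

lemma cG_arcE:
  assumes "(e, u, v) \<in> mg_arcs (cG_verts m) (cG_edges V E z) (cG_inc m C D)"
  obtains x y where "e = {x, y}" "x \<in> V" "y \<in> V" "E x y" "z y = - z x" "block x = u" "block y = v"
proof -
  have e: "e \<in> cG_edges V E z" and inc: "block ` e = {u, v}"
    using assms unfolding mg_arcs_def cG_inc_def by auto
  obtain x y where xy: "e = {x, y}" "x \<in> V" "y \<in> V" "E x y" "z x = 1" "z y = -1"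
    using e by (rule cG_edgesE)
  have "block x \<noteq> block y"
    using xy(2) by (cases rule: blockE; cases rule: blockE[OF xy(3)]) (use xy(5,6) in auto)
  then have "u = block x \<and> v = block y \<or> u = block y \<and> v = block x"
    using inc unfolding xy(1) by (auto simp: doubleton_eq_iff)
  then show ?thesis
  proof
    assume "u = block x \<and> v = block y"
    then show ?thesis using that xy by simp
  next
    assume "u = block y \<and> v = block x"
    then show ?thesis using that[of y x] xy adjacent_sym by (simp add: insert_commute)
  qed
qed

end

lemma induced_aut_unique:
  assumes "induced_aut m C D V \<sigma> g" "induced_aut m C D V \<tau> g"
  shows "\<sigma> = \<tau>"
proof
  fix x
  have "\<sigma> ` {x} = \<tau> ` {x}" using assms unfolding induced_aut_def by metis
  then show "\<sigma> x = \<tau> x" by simp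
qed

lemma arc_transitive_by_mono:
  "arc_transitive_by VG EG inc A \<Longrightarrow> A \<subseteq> B \<Longrightarrow> arc_transitive_by VG EG inc B"
  unfolding arc_transitive_by_def by blast

locale eigen_cycle_contraction = cycle_contraction +
  assumes cubic_graph: "cubic V E"
    and simple_eigenvalue_1: "simple_eigenvalue V E 1"
    and eigenvector_z: "is_eigvec V E 1 z"
begin

lemma graph_aut_sign:
  "\<sigma> \<in> graph_aut V E \<Longrightarrow> \<exists>c. (c = 1 \<or> c = -1) \<and> (\<forall>x\<in>V. z (\<sigma> x) = c * z x)"
  by (rule graph_aut_sign_eigenvector[OF finite_V simple_eigenvalue_1 eigenvector_z signs])

lemma graph_aut_respects_signs: "\<sigma> \<in> graph_aut V E \<Longrightarrow> respects_signs \<sigma>"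
  using graph_aut_sign unfolding respects_signs_def by fastforce

lemma graph_aut_opposite_neighbour:
  assumes \<sigma>: "\<sigma> \<in> graph_aut V E"
    and xy: "x \<in> V" "y \<in> V" "E x y" "z y = - z x"
    and y': "y' \<in> V" "E (\<sigma> x) y'" "z y' = - z (\<sigma> x)"
  shows "\<sigma> y = y'"
proof -
  obtain c where c: "\<forall>x\<in>V. z (\<sigma> x) = c * z x" using graph_aut_sign[OF \<sigma>] by blast
  have "\<sigma> y \<in> V" "E (\<sigma> x) (\<sigma> y)" "z (\<sigma> y) = - z (\<sigma> x)"
    using xy c graph_aut_in_V[OF \<sigma>] graph_aut_adj[OF \<sigma>] by auto
  then show ?thesis
    using cubic_eigenvalue_1_unique_opposite_neighbour[OF finite_V cubic_graph signs eigenvector_z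
        graph_aut_in_V[OF \<sigma> xy(1)]] y' by blast
qed

lemma contraction_arc_transitive:
  assumes H: "H \<subseteq> graph_aut V E" "transitive_on H V"
  shows "arc_transitive_by (cG_verts m) (cG_edges V E z) (cG_inc m C D)
    {g\<in>mg_aut (cG_verts m) (cG_edges V E z) (cG_inc m C D). \<exists>\<sigma>\<in>H. induced_aut m C D V \<sigma> g}"
  unfolding arc_transitive_by_def
proof (intro ballI)
  fix a b assume "a \<in> mg_arcs (cG_verts m) (cG_edges V E z) (cG_inc m C D)"
    and "b \<in> mg_arcs (cG_verts m) (cG_edges V E z) (cG_inc m C D)"
  moreover obtain e u v e' u' v' where "a = (e, u, v)" "b = (e', u', v')" by (cases a, cases b) blast
  ultimately obtain x y x' y' where
    a: "a = ({x, y}, block x, block y)" "x \<in> V" "y \<in> V" "E x y" "z y = - z x" and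
    b: "b = ({x', y'}, block x', block y')" "x' \<in> V" "y' \<in> V" "E x' y'" "z y' = - z x'"
    by (metis cG_arcE)
  obtain \<sigma> where \<sigma>: "\<sigma> \<in> H" "\<sigma> x = x'" using H(2) a(2) b(2) unfolding transitive_on_def by blast
  then have aut: "\<sigma> \<in> graph_aut V E" "respects_signs \<sigma>" using H(1) graph_aut_respects_signs by auto
  have "\<sigma> y = y'" using graph_aut_opposite_neighbour[OF aut(1) a(2-5)] b(3-5) \<sigma>(2) by simp
  then have "mg_arc_map (contraction_map \<sigma>) a = b"
    using a b \<sigma>(2) contraction_map_block[OF aut] by (simp add: mg_arc_map_def contraction_map_def)
  moreover have "contraction_map \<sigma> \<in> mg_aut (cG_verts m) (cG_edges V E z) (cG_inc m C D)"
    by (rule contraction_map_mg_aut[OF aut])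
  ultimately show "\<exists>g\<in>{g\<in>mg_aut (cG_verts m) (cG_edges V E z) (cG_inc m C D).
      \<exists>\<sigma>\<in>H. induced_aut m C D V \<sigma> g}. mg_arc_map g a = b"
    using induced_aut_contraction_map[OF aut] \<sigma>(1) by blast
qed

end

theorem lemma4p2:
  fixes V :: "'a set" and E :: "'a \<Rightarrow> 'a \<Rightarrow> bool" and z :: "'a \<Rightarrow> real"
    and m k :: nat and C D :: "nat \<Rightarrow> 'a set"
  assumes "simple_graph V E" and "cubic V E" and "vertex_transitive V E"
    and "simple_eigenvalue V E 1"
    and "\<forall>x\<in>V. z x = 1 \<or> z x = -1"
    and "is_eigvec V E 1 z"
    and "cycle_decomp E {x\<in>V. z x = 1} m C k"
    and "cycle_decomp E {x\<in>V. z x = -1} m D k"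
  shows "(\<forall>\<sigma>\<in>graph_aut V E. \<exists>g\<in>mg_aut (cG_verts m) (cG_edges V E z) (cG_inc m C D).
              induced_aut m C D V \<sigma> g)
    \<and> (\<forall>\<sigma>\<in>graph_aut V E. \<forall>\<tau>\<in>graph_aut V E.
              (\<exists>g. induced_aut m C D V \<sigma> g \<and> induced_aut m C D V \<tau> g) \<longrightarrow> \<sigma> = \<tau>)
    \<and> (\<forall>H. aut_subgroup V E H \<and> transitive_on H V \<longrightarrow>
          arc_transitive_by (cG_verts m) (cG_edges V E z) (cG_inc m C D)
            {g\<in>mg_aut (cG_verts m) (cG_edges V E z) (cG_inc m C D). \<exists>\<sigma>\<in>H. induced_aut m C D V \<sigma> g})
    \<and> mg_arc_transitive (cG_verts m) (cG_edges V E z) (cG_inc m C D)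
    \<and> mg_bipartite_cd m (cG_edges V E z) (cG_inc m C D)"
proof -
  interpret eigen_cycle_contraction V E z m k C D
    by (intro eigen_cycle_contraction.intro cycle_contraction.intro
        eigen_cycle_contraction_axioms.intro) (rule assms)+
  have induced: "\<exists>g\<in>mg_aut (cG_verts m) (cG_edges V E z) (cG_inc m C D). induced_aut m C D V \<sigma> g"
    if "\<sigma> \<in> graph_aut V E" for \<sigma>
    using that graph_aut_respects_signs contraction_map_mg_aut induced_aut_contraction_map by blast
  have transitive: "arc_transitive_by (cG_verts m) (cG_edges V E z) (cG_inc m C D)
      {g\<in>mg_aut (cG_verts m) (cG_edges V E z) (cG_inc m C D). \<exists>\<sigma>\<in>H. induced_aut m C D V \<sigma> g}"
    if "aut_subgroup V E H" "transitive_on H V" for H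
    using contraction_arc_transitive that unfolding aut_subgroup_def by blast
  have "transitive_on (graph_aut V E) V"
    using assms(3) unfolding vertex_transitive_def transitive_on_def .
  then have "mg_arc_transitive (cG_verts m) (cG_edges V E z) (cG_inc m C D)"
    unfolding mg_arc_transitive_def
    by (rule arc_transitive_by_mono[OF contraction_arc_transitive[OF subset_refl]]) blast
  then show ?thesis
    using induced induced_aut_unique transitive contraction_bipartite by blast
qed

end
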